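(* Let $n$ be a positive integer, $q=2^n$, $k$ an integer with $1\le k\le n-1$ and $k\notin\{n/3,2n/3\}$, $d=\gcd(n,k)$, $q_0=2^d$, $s=n/d$ odd. For $(\alpha,\beta)\in\mathbb{F}_q^2\setminus\{(0,0)\}$ let $r_{\alpha,\beta}$ be the $\mathbb{F}_{q_0}$-rank of the bilinear form $B_{\alpha,\beta}(x,y)=f_{\alpha,\beta}(x+y)-f_{\alpha,\beta}(x)-f_{\alpha,\beta}(y)$ where $f_{\alpha,\beta}(x)=\mathrm{Tr}_d^n(\alpha x^{2^{2k}+1}+\beta x^{2^k+1})$. Let $n_i$ be the number of $(\alpha,\beta)\neq(0,0)$ with $r_{\alpha,\beta}=s-i$. Then $n_1+n_3=2^{2n}-1$ and $$n_1=\frac{(2^n-1)(2^{n+2d}-2^n-2^{n-d}+2^{2d})}{2^{2d}-1},\qquad n_3=\frac{(2^{n-d}-1)(2^n-1)}{2^{2d}-1}.$$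
   Context: $\mathrm{Tr}_d^n:\mathbb{F}_{2^n}\to\mathbb{F}_{2^d}$ is the relative trace $x\mapsto\sum_{i=0}^{s-1}x^{2^{di}}$; $\mathbb{F}_q$ is regarded as an $s$-dimensional vector space over $\mathbb{F}_{q_0}$. *)

theory Defs
  imports Complex_Main
begin

text \<open>Finite field F_q with q = 2^n is modelled as a finite field type 'a with CARD('a) = 2^n.
The subfield F_{q0}, q0 = 2^d, is the set of fixed points of x \<mapsto> x^(2^d).\<close>

definition subfield_fix :: "nat \<Rightarrow> 'a::field set" where
  "subfield_fix d = {x. x ^ (2 ^ d) = x}"

definition rel_trace :: "nat \<Rightarrow> nat \<Rightarrow> 'a::field \<Rightarrow> 'a" where
  "rel_trace d s x = (\<Sum>i<s. x ^ (2 ^ (d * i)))"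

definition f_ab :: "nat \<Rightarrow> nat \<Rightarrow> nat \<Rightarrow> 'a::field \<Rightarrow> 'a \<Rightarrow> 'a \<Rightarrow> 'a" where
  "f_ab d s k \<alpha> \<beta> x = rel_trace d s (\<alpha> * x ^ (2 ^ (2 * k) + 1) + \<beta> * x ^ (2 ^ k + 1))"

definition B_ab :: "nat \<Rightarrow> nat \<Rightarrow> nat \<Rightarrow> 'a::field \<Rightarrow> 'a \<Rightarrow> 'a \<Rightarrow> 'a \<Rightarrow> 'a" where
  "B_ab d s k \<alpha> \<beta> x y = f_ab d s k \<alpha> \<beta> (x + y) - f_ab d s k \<alpha> \<beta> x - f_ab d s k \<alpha> \<beta> y"

definition radical_ab :: "nat \<Rightarrow> nat \<Rightarrow> nat \<Rightarrow> 'a::field \<Rightarrow> 'a \<Rightarrow> 'a set" where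
  "radical_ab d s k \<alpha> \<beta> = {x. \<forall>y. B_ab d s k \<alpha> \<beta> x y = 0}"

definition fdim :: "'a set \<Rightarrow> 'a set \<Rightarrow> nat" where
  "fdim K W = (THE m. card W = card K ^ m)"

definition rank_ab :: "nat \<Rightarrow> nat \<Rightarrow> nat \<Rightarrow> 'a::field \<Rightarrow> 'a \<Rightarrow> nat" where
  "rank_ab d s k \<alpha> \<beta> = s - fdim (subfield_fix d :: 'a set) (radical_ab d s k \<alpha> \<beta>)"

end

theory Submission
  imports Defs "HOL-Computational_Algebra.Polynomial" "HOL-Library.Product_Plus"
begin

text \<open>
  Write \<open>q = 2^n\<close>, \<open>q\<^sub>0 = 2^d\<close>, \<open>F = F\<^sub>q\<^sub>0\<close> and \<open>Tr = Tr\<^sub>d\<^sup>n\<close>.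
  Moving all Frobenius powers onto \<open>x\<close>, the form becomes \<open>B(x,y) = Tr (y \<cdot> L(x))\<close> for an
  \<open>F\<close>-linear map \<open>L = L\<^sub>\<alpha>\<^sub>\<beta>\<close>; since the trace form is nondegenerate the radical of \<open>B\<close>
  is the kernel of \<open>L\<close>.  Raising \<open>L(x)\<close> to the power \<open>2^(2k)\<close> gives a \<open>2^k\<close>-linearized
  polynomial of \<open>2^k\<close>-degree at most 4, and such a polynomial has at most \<open>q\<^sub>0^4\<close> roots
  (the fixed field of \<open>x \<mapsto> x^(2^k)\<close> is \<open>F\<close>).  As \<open>B\<close> is alternating, its radical has even
  codimension in the odd-dimensional space \<open>F\<^sub>q\<close>, so the radical has dimension 1 or 3.
  Finally we count pairs \<open>((\<alpha>,\<beta>), x)\<close> with \<open>x \<noteq> 0\<close> and \<open>L\<^sub>\<alpha>\<^sub>\<beta>(x) = 0\<close> in two ways: for fixed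
  \<open>x \<noteq> 0\<close> the map \<open>(\<alpha>,\<beta>) \<mapsto> L\<^sub>\<alpha>\<^sub>\<beta>(x)\<close> is additive onto the hyperplane \<open>{z. Tr (x z) = 0}\<close>,
  hence has exactly \<open>q\<^sub>0^(s+1)\<close> zeros.  This yields two linear equations for \<open>n\<^sub>1, n\<^sub>3\<close>.
\<close>

section \<open>Arithmetic in characteristic two\<close>

lemma char2_add_self:
  assumes "(2::'a::comm_ring_1) = 0" shows "(x::'a) + x = 0"
  by (metis assms mult_2 mult_zero_left)

lemma char2_minus:
  assumes "(2::'a::comm_ring_1) = 0" shows "- (x::'a) = x"
  using char2_add_self[OF assms, of x] by (simp add: add_eq_0_iff2 eq_neg_iff_add_eq_0)

lemma char2_diff:
  assumes "(2::'a::comm_ring_1) = 0" shows "(x::'a) - y = x + y"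
  using char2_minus[OF assms, of y] by simp

lemma char2_pow2_add:
  assumes two: "(2::'a::comm_ring_1) = 0" shows "((x::'a) + y) ^ (2^j) = x^(2^j) + y^(2^j)"
proof (induction j)
  case (Suc j)
  have sq: "(u + v)^2 = u^2 + v^2" for u v :: 'a
  proof -
    have "(u + v)^2 = u^2 + v^2 + 2*u*v" by (simp add: power2_eq_square algebra_simps)
    thus ?thesis using two by simp
  qed
  have "(x+y)^(2^Suc j) = ((x+y)^(2^j))^2" by (simp add: power_mult[symmetric] mult.commute)
  also have "\<dots> = (x^(2^j))^2 + (y^(2^j))^2" using Suc sq by simp
  also have "\<dots> = x^(2^Suc j) + y^(2^Suc j)" by (simp add: power_mult[symmetric] mult.commute)
  finally show ?case .
qed simp

lemma char2_pow2_sum: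
  assumes two: "(2::'a::comm_ring_1) = 0"
  shows "(\<Sum>i\<in>A. (f i::'a)) ^ (2^j) = (\<Sum>i\<in>A. f i ^ (2^j))"
proof (induction A rule: infinite_finite_induct)
  case (insert x F) then show ?case by (simp add: char2_pow2_add[OF two])
qed (auto simp: power_0_left)

lemma char2_pow2_diff:
  assumes two: "(2::'a::comm_ring_1) = 0" shows "((x::'a) - y) ^ (2^j) = x^(2^j) - y^(2^j)"
  unfolding char2_diff[OF two] by (rule char2_pow2_add[OF two])

lemma pow2_pow2: "((x::'a::monoid_mult) ^ (2^a)) ^ (2^b) = x ^ (2^(a+b))"
  by (simp add: power_mult[symmetric] power_add)

lemma additive_fiber_card:
  fixes g :: "'c::{finite,ab_group_add} \<Rightarrow> 'b::ab_group_add"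
  assumes add: "\<And>a b. g (a + b) = g a + g b"
  shows "card (g -` {g x0}) = card {x. g x = 0}"
proof -
  have diff: "g (a - b) = g a - g b" for a b
    using add[of "a - b" b] by (simp add: eq_diff_eq)
  have "g -` {g x0} = (\<lambda>t. x0 + t) ` {x. g x = 0}"
  proof (intro equalityI subsetI)
    fix y assume "y \<in> g -` {g x0}"
    hence "g (y - x0) = 0" using diff by simp
    thus "y \<in> (\<lambda>t. x0 + t) ` {x. g x = 0}" by (auto intro!: image_eqI[where x="y - x0"])
  qed (use add in auto)
  moreover have "inj (\<lambda>t. x0 + (t::'c))" by (auto simp: inj_on_def)
  ultimately show ?thesis by (simp add: card_image inj_on_subset)
qed

lemma additive_card_kernel_image:
  fixes g :: "'c::{finite,ab_group_add} \<Rightarrow> 'b::ab_group_add"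
  assumes add: "\<And>a b. g (a + b) = g a + g b"
  shows "card (UNIV::'c set) = card {x. g x = 0} * card (range g)"
proof -
  have "UNIV = (\<Union>v\<in>range g. g -` {v})" by auto
  hence "card (UNIV::'c set) = card (\<Union>v\<in>range g. g -` {v})" by simp
  also have "\<dots> = (\<Sum>v\<in>range g. card (g -` {v}))" by (rule card_UN_disjoint) auto
  also have "\<dots> = (\<Sum>v\<in>range g. card {x. g x = 0})"
  proof (rule sum.cong[OF refl])
    fix v assume "v \<in> range g"
    then obtain x0 where "v = g x0" by auto
    thus "card (g -` {v}) = card {x. g x = 0}" using additive_fiber_card[of g, OF add] by simp
  qed
  finally show ?thesis by simp
qed

lemma additive_card_preimage:
  fixes g :: "'c::{finite,ab_group_add} \<Rightarrow> 'b::ab_group_add"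
  assumes add: "\<And>a b. g (a + b) = g a + g b" and fS: "finite S"
  shows "card {y. g y \<in> S} \<le> card S * card {x. g x = 0}"
proof -
  have "{y. g y \<in> S} = (\<Union>v\<in>S \<inter> range g. g -` {v})" by auto
  hence "card {y. g y \<in> S} \<le> (\<Sum>v\<in>S \<inter> range g. card (g -` {v}))"
    using card_UN_le[of "S \<inter> range g" "\<lambda>v. g -` {v}"] by simp
  also have "\<dots> = (\<Sum>v\<in>S \<inter> range g. card {x. g x = 0})"
  proof (rule sum.cong[OF refl])
    fix v assume "v \<in> S \<inter> range g"
    then obtain x0 where "v = g x0" by auto
    thus "card (g -` {v}) = card {x. g x = 0}" using additive_fiber_card[of g, OF add] by simp
  qed
  also have "\<dots> \<le> card S * card {x. g x = 0}"
    using card_mono[OF fS, of "S \<inter> range g"] by (simp add: mult_right_mono)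
  finally show ?thesis .
qed

section \<open>Finite fields\<close>

text \<open>A field with \<open>2^n\<close> elements has characteristic two: translating the sum of all
  elements by \<open>x\<close> shows \<open>|F| \<cdot> x = 0\<close>.\<close>
lemma finite_field_char2:
  assumes "card (UNIV :: 'a::{finite,field} set) = 2 ^ n" "0 < n"
  shows "(2::'a) = 0"
proof -
  have "of_nat (card (UNIV::'a set)) * x = 0" for x :: 'a
  proof -
    have "bij_betw (\<lambda>y. x + y) UNIV UNIV"
      by (rule bij_betw_byWitness[where f'="\<lambda>y. y - x"]) auto
    hence "(\<Sum>y\<in>UNIV. x + y) = (\<Sum>y\<in>UNIV. y)" by (rule sum.reindex_bij_betw)
    thus ?thesis by (simp add: sum.distrib)
  qed
  from this[of 1] assms have "(2::'a)^n = 0" by simp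
  thus ?thesis by simp
qed

lemma finite_field_pow_card:
  fixes x :: "'a::{finite,field}"
  shows "x ^ card (UNIV :: 'a set) = x"
proof (cases "x = 0")
  case True
  then show ?thesis by (simp add: finite_UNIV_card_ge_0 zero_power)
next
  case False
  let ?S = "UNIV - {0::'a}"
  have "bij_betw (\<lambda>y. x * y) ?S ?S"
    by (rule bij_betw_byWitness[where f'="\<lambda>y. y / x"]) (use False in auto)
  hence "(\<Prod>y\<in>?S. x * y) = (\<Prod>y\<in>?S. y)" by (rule prod.reindex_bij_betw)
  hence "x ^ card ?S = 1" by (simp add: prod.distrib)
  moreover have "card ?S = card (UNIV::'a set) - 1" by (simp add: card_Diff_singleton)
  moreover have "card (UNIV::'a set) > 0" by (simp add: finite_UNIV_card_ge_0)
  ultimately show ?thesis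
    by (metis One_nat_def Suc_pred mult.commute mult_1 power_Suc)
qed

lemma finite_field_frobenius_period:
  fixes x :: "'a::{finite,field}"
  assumes "card (UNIV :: 'a set) = 2 ^ n"
  shows "x ^ (2 ^ (n * t)) = x"
proof (induction t)
  case (Suc t)
  have "x ^ (2 ^ (n * Suc t)) = (x ^ (2 ^ (n*t))) ^ (2^n)"
    by (simp add: pow2_pow2 add.commute)
  also have "\<dots> = x" using Suc finite_field_pow_card[of x] assms by simp
  finally show ?case .
qed simp

section \<open>Roots of linearized polynomials\<close>

text \<open>Abel summation for \<open>\<Sum> b\<^sub>i (y^(2^(j i)) - y)\<close>, rewriting it as a linearized polynomial
  in \<open>y^(2^j) - y\<close>; this lowers the \<open>2^j\<close>-degree by one.\<close>
lemma char2_abel_summation: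
  fixes b :: "nat \<Rightarrow> 'a::comm_ring_1"
  assumes two: "(2::'a) = 0"
  shows "(\<Sum>i\<le>m. b i * (y^(2^(j*i)) - y))
       = (\<Sum>l<m. (\<Sum>i\<in>{l<..m}. b i) * (y^(2^j) - y)^(2^(j*l)))"
proof (induction m)
  case (Suc m)
  define z where "z l = (y^(2^j) - y)^(2^(j*l))" for l
  have z: "z l = y^(2^(j*Suc l)) - y^(2^(j*l))" for l
    unfolding z_def char2_pow2_diff[OF two] pow2_pow2 by (simp add: add.commute)
  have telescope: "(\<Sum>l<Suc m. z l) = y^(2^(j*Suc m)) - y"
    unfolding z using sum_lessThan_telescope[of "\<lambda>l. y^(2^(j*l))" "Suc m"] by simp
  have split: "(\<Sum>i\<in>{l<..Suc m}. b i) = b (Suc m) + (\<Sum>i\<in>{l<..m}. b i)" if "l < Suc m" for l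
  proof -
    from that have "{l<..Suc m} = insert (Suc m) {l<..m}" by auto
    thus ?thesis by simp
  qed
  have "(\<Sum>l<Suc m. (\<Sum>i\<in>{l<..Suc m}. b i) * z l)
      = (\<Sum>l<Suc m. b (Suc m) * z l + (\<Sum>i\<in>{l<..m}. b i) * z l)"
    by (rule sum.cong[OF refl]) (simp add: split distrib_right)
  also have "\<dots> = b (Suc m) * (\<Sum>l<Suc m. z l) + (\<Sum>l<Suc m. (\<Sum>i\<in>{l<..m}. b i) * z l)"
    by (simp add: sum.distrib sum_distrib_left distrib_left)
  also have "(\<Sum>l<Suc m. (\<Sum>i\<in>{l<..m}. b i) * z l) = (\<Sum>l<m. (\<Sum>i\<in>{l<..m}. b i) * z l)"
    by simp
  finally have "(\<Sum>l<Suc m. (\<Sum>i\<in>{l<..Suc m}. b i) * z l)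
      = b (Suc m) * (y^(2^(j*Suc m)) - y) + (\<Sum>l<m. (\<Sum>i\<in>{l<..m}. b i) * z l)"
    unfolding telescope .
  then show ?case using Suc unfolding z_def by (simp add: add.commute)
qed simp

lemma linearized_substitute_root:
  fixes a :: "nat \<Rightarrow> 'a::comm_ring_1"
  assumes two: "(2::'a) = 0" and root: "(\<Sum>i\<le>m. a i * u^(2^(j*i))) = 0"
  shows "(\<Sum>i\<le>m. a i * (u * y)^(2^(j*i)))
       = (\<Sum>l<m. (\<Sum>i\<in>{l<..m}. a i * u^(2^(j*i))) * (y^(2^j) - y)^(2^(j*l)))"
proof -
  define b where "b i = a i * u^(2^(j*i))" for i
  have "(\<Sum>i\<le>m. a i * (u * y)^(2^(j*i))) = (\<Sum>i\<le>m. b i * y^(2^(j*i)))"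
    unfolding b_def by (simp add: power_mult_distrib mult.assoc)
  also have "\<dots> = (\<Sum>i\<le>m. b i * (y^(2^(j*i)) - y)) + (\<Sum>i\<le>m. b i) * y"
    by (simp only: right_diff_distrib sum_subtractf sum_distrib_right diff_add_cancel)
  also have "(\<Sum>i\<le>m. b i) = 0" using root unfolding b_def .
  finally show ?thesis unfolding char2_abel_summation[OF two] b_def by simp
qed

text \<open>This is much sharper than the degree bound \<open>2^(jm)\<close>.
  Proof: if \<open>u \<noteq> 0\<close> is a root, the roots are \<open>u y\<close> with \<open>y^(2^j) - y\<close> a root of a polynomial of
  degree \<open>m - 1\<close>, and the additive map \<open>y \<mapsto> y^(2^j) - y\<close> has kernel \<open>K\<close>.\<close>
lemma linearized_root_bound:
  fixes a :: "nat \<Rightarrow> 'a::{finite,field}"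
  assumes two: "(2::'a) = 0" and lead: "a m \<noteq> 0"
  shows "card {x. (\<Sum>i\<le>m. a i * x^(2^(j*i))) = 0} \<le> card {x::'a. x^(2^j) = x} ^ m"
  using lead
proof (induction m arbitrary: a)
  case 0
  hence "{x. (\<Sum>i\<le>0. a i * x^(2^(j*i))) = 0} = {0::'a}" by auto
  then show ?case by simp
next
  case (Suc m a)
  let ?K = "{x. (\<Sum>i\<le>Suc m. a i * x^(2^(j*i))) = 0}"
  let ?F = "{x::'a. x^(2^j) = x}"
  have "?F \<noteq> {}" by (auto intro!: exI[of _ 0])
  hence F_ne: "1 \<le> card ?F" by (simp add: Suc_leI card_gt_0_iff)
  show ?case
  proof (cases "?K \<subseteq> {0}")
    case True
    hence "card ?K \<le> card {0::'a}" by (intro card_mono) auto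
    also have "\<dots> \<le> card ?F ^ Suc m" using F_ne by simp
    finally show ?thesis .
  next
    case False
    then obtain u where u: "u \<in> ?K" "u \<noteq> 0" by auto
    define c where "c l = (\<Sum>i\<in>{l<..Suc m}. a i * u^(2^(j*i)))" for l
    have "{m<..Suc m} = {Suc m}" by auto
    hence c_lead: "c m \<noteq> 0" using Suc.prems u(2) by (simp add: c_def)
    define N where "N z = (\<Sum>l\<le>m. c l * z^(2^(j*l)))" for z
    define g where "g y = y^(2^j) - y" for y :: 'a
    have g_add: "g (x + y) = g x + g y" for x y
      unfolding g_def char2_pow2_add[OF two] by simp
    have root: "(\<Sum>i\<le>Suc m. a i * u^(2^(j*i))) = 0" using u(1) by simp
    have "N (g y) = (\<Sum>i\<le>Suc m. a i * (u * y)^(2^(j*i)))" for y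
      unfolding linearized_substitute_root[OF two root] N_def c_def g_def
      by (simp add: lessThan_Suc_atMost)
    hence "?K \<subseteq> (\<lambda>y. u * y) ` {y. g y \<in> {z. N z = 0}}"
      using u(2) by (auto intro!: image_eqI[where x="_ / u"])
    hence "card ?K \<le> card ((\<lambda>y. u * y) ` {y. g y \<in> {z. N z = 0}})"
      by (intro card_mono) simp_all
    also have "\<dots> \<le> card {y. g y \<in> {z. N z = 0}}" by (rule card_image_le) simp
    also have "\<dots> \<le> card {z. N z = 0} * card {y. g y = 0}"
      by (rule additive_card_preimage[of g, OF g_add]) simp
    also have "\<dots> \<le> card ?F ^ m * card ?F"
      using Suc.IH[of c, OF c_lead] unfolding N_def g_def by simp
    finally show ?thesis by (simp add: mult.commute)
  qed
qed

section \<open>Alternating forms over a subfield\<close>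

definition is_subfield :: "'a::field set \<Rightarrow> bool" where
  "is_subfield F \<longleftrightarrow> 0 \<in> F \<and> 1 \<in> F \<and>
     (\<forall>a\<in>F. \<forall>b\<in>F. a + b \<in> F \<and> a * b \<in> F \<and> - a \<in> F \<and> inverse a \<in> F)"

definition is_subspace :: "'a::field set \<Rightarrow> 'a set \<Rightarrow> bool" where
  "is_subspace F V \<longleftrightarrow> 0 \<in> V \<and> (\<forall>x\<in>V. \<forall>y\<in>V. x + y \<in> V) \<and> (\<forall>c\<in>F. \<forall>x\<in>V. c * x \<in> V)"

lemma subspace_diff:
  assumes "is_subfield F" "is_subspace F V" "x \<in> V" "y \<in> V" shows "x - y \<in> V"
proof -
  have "(- 1) * y \<in> V" using assms unfolding is_subfield_def is_subspace_def by blast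
  thus ?thesis using assms(2,3) unfolding is_subspace_def by (metis diff_conv_add_uminus mult_minus1)
qed

definition adjoin :: "'a::field set \<Rightarrow> 'a set \<Rightarrow> 'a \<Rightarrow> 'a set" where
  "adjoin F W v = (\<lambda>(w, c). w + c * v) ` (W \<times> F)"

lemma adjoin_iff: "x \<in> adjoin F W v \<longleftrightarrow> (\<exists>w\<in>W. \<exists>c\<in>F. x = w + c * v)"
  unfolding adjoin_def by auto

lemma adjoin_subspace:
  assumes sf: "is_subfield F" and W: "is_subspace F W"
  shows "is_subspace F (adjoin F W v)"
  unfolding is_subspace_def
proof (intro conjI ballI)
  have "0 = 0 + 0 * v" by simp
  thus "0 \<in> adjoin F W v" unfolding adjoin_iff using W sf unfolding is_subspace_def is_subfield_def by blast
next
  fix x y assume "x \<in> adjoin F W v" "y \<in> adjoin F W v"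
  then obtain w c w' c' where "w \<in> W" "c \<in> F" "w' \<in> W" "c' \<in> F" "x = w + c * v" "y = w' + c' * v"
    unfolding adjoin_iff by auto
  moreover have "x + y = (w + w') + (c + c') * v" using calculation by (simp add: algebra_simps)
  ultimately show "x + y \<in> adjoin F W v"
    unfolding adjoin_iff using W sf unfolding is_subspace_def is_subfield_def by blast
next
  fix a x assume "a \<in> F" "x \<in> adjoin F W v"
  then obtain w c where "w \<in> W" "c \<in> F" "x = w + c * v" unfolding adjoin_iff by auto
  moreover have "a * x = a * w + (a * c) * v" using calculation by (simp add: algebra_simps)
  ultimately show "a * x \<in> adjoin F W v"
    unfolding adjoin_iff using W sf \<open>a \<in> F\<close> unfolding is_subspace_def is_subfield_def by blast
qed

lemma adjoin_bounds:
  assumes sf: "is_subfield F" and W: "is_subspace F W"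
  shows "insert v W \<subseteq> adjoin F W v"
    and "is_subspace F V \<Longrightarrow> W \<subseteq> V \<Longrightarrow> v \<in> V \<Longrightarrow> adjoin F W v \<subseteq> V"
proof -
  show "insert v W \<subseteq> adjoin F W v"
  proof
    fix x assume "x \<in> insert v W"
    moreover have "v = 0 + 1 * v" "x = x + 0 * v" by simp_all
    ultimately show "x \<in> adjoin F W v"
      unfolding adjoin_iff using W sf unfolding is_subspace_def is_subfield_def by blast
  qed
  show "adjoin F W v \<subseteq> V" if V: "is_subspace F V" and "W \<subseteq> V" "v \<in> V"
  proof
    fix x assume "x \<in> adjoin F W v"
    then obtain w c where "w \<in> W" "c \<in> F" "x = w + c * v" unfolding adjoin_iff by blast
    thus "x \<in> V" using V \<open>W \<subseteq> V\<close> \<open>v \<in> V\<close> unfolding is_subspace_def by blast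
  qed
qed

text \<open>For \<open>v \<notin> W\<close> the sum \<open>W + F v\<close> is direct, so it has \<open>|W| \<cdot> |F|\<close> elements.\<close>
lemma adjoin_card:
  fixes W :: "'a::{finite,field} set"
  assumes sf: "is_subfield F" and W: "is_subspace F W" and v: "v \<notin> W"
  shows "card (adjoin F W v) = card W * card F"
proof -
  have "inj_on (\<lambda>(w, c). w + c * v) (W \<times> F)"
  proof (rule inj_onI, clarify)
    fix w c w' c' assume h: "w \<in> W" "c \<in> F" "w' \<in> W" "c' \<in> F" "w + c * v = w' + c' * v"
    show "w = w' \<and> c = c'"
    proof (cases "c = c'")
      case False
      have "inverse (c - c') \<in> F"
        using sf h(2,4) unfolding is_subfield_def diff_conv_add_uminus by blast
      moreover have "w' - w \<in> W" using subspace_diff[OF sf W h(3,1)] .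
      moreover have "(c - c') * v = w' - w" using h(5) by (simp add: algebra_simps)
      hence "v = inverse (c - c') * (w' - w)" using False by (simp add: field_simps)
      ultimately have "v \<in> W" using W unfolding is_subspace_def by simp
      thus ?thesis using v by blast
    qed (use h(5) in simp)
  qed
  thus ?thesis unfolding adjoin_def by (simp add: card_image card_cartesian_product)
qed

text \<open>Every subspace has \<open>|F|^m\<close> elements for some \<open>m\<close>: starting from \<open>{0}\<close>, extend one vector
  at a time inside \<open>V\<close>.\<close>
lemma subspace_card_power:
  fixes V :: "'a::{finite,field} set"
  assumes sf: "is_subfield F" and V: "is_subspace F V"
  shows "\<exists>m. card V = card F ^ m"
proof -
  have "\<exists>m. card V = card F ^ m"
    if "is_subspace F W" "W \<subseteq> V" "card W = card F ^ j" for W j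
    using that
  proof (induction "card V - card W" arbitrary: W j rule: less_induct)
    case less
    show ?case
    proof (cases "W = V")
      case True then show ?thesis using less.prems by blast
    next
      case False
      then obtain v where v: "v \<in> V" "v \<notin> W" using less.prems(2) by blast
      let ?W' = "adjoin F W v"
      have "W \<subset> ?W'" using adjoin_bounds(1)[OF sf less.prems(1)] v(2) by blast
      have "?W' \<subseteq> V" by (rule adjoin_bounds(2)[OF sf less.prems(1) V less.prems(2) v(1)])
      have "card W < card ?W'" using \<open>W \<subset> ?W'\<close> by (simp add: psubset_card_mono)
      moreover have "card ?W' \<le> card V" using \<open>?W' \<subseteq> V\<close> by (simp add: card_mono)
      ultimately have "card V - card ?W' < card V - card W" by linarith
      thus ?thesis
        using less.hyps[OF _ adjoin_subspace[OF sf less.prems(1)] \<open>?W' \<subseteq> V\<close>, of "Suc j"]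
          adjoin_card[OF sf less.prems(1) v(2)] less.prems(3) by simp
    qed
  qed
  moreover have "is_subspace F {0}" "{0} \<subseteq> V" "card {0::'a} = card F ^ 0"
    using sf V unfolding is_subspace_def is_subfield_def by auto
  ultimately show ?thesis by blast
qed

locale alternating_form =
  fixes F :: "'a::{finite,field} set" and B :: "'a \<Rightarrow> 'a \<Rightarrow> 'a"
  assumes subfield: "is_subfield F"
    and sym: "\<And>x y. B x y = B y x"
    and alternating: "\<And>x. B x x = 0"
    and add_right: "\<And>x y z. B x (y + z) = B x y + B x z"
    and scale_right: "\<And>x y c. c \<in> F \<Longrightarrow> B x (c * y) = c * B x y"
    and values_in: "\<And>x y. B x y \<in> F"
begin

definition radical_in :: "'a set \<Rightarrow> 'a set" where
  "radical_in V = {x\<in>V. \<forall>y\<in>V. B x y = 0}"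

lemma diff_right: "B x (y - z) = B x y - B x z"
  using add_right[of x "y - z" z] by (simp add: eq_diff_eq)

lemma zero_right: "B x 0 = 0"
  using diff_right[of x 0 0] by simp

lemma radical_subspace: "is_subspace F (radical_in UNIV)"
proof -
  have rad: "x \<in> radical_in UNIV \<longleftrightarrow> (\<forall>y. B y x = 0)" for x
    unfolding radical_in_def using sym by auto
  show ?thesis
    unfolding is_subspace_def by (simp add: rad zero_right add_right scale_right)
qed

lemma inverse_in_F: "a \<in> F \<Longrightarrow> inverse a \<in> F"
  using subfield unfolding is_subfield_def by auto

end

text \<open>A hyperbolic pair \<open>e, f\<close> (with \<open>B e f = 1\<close>) in a subspace \<open>V\<close> splits off:
  \<open>V = W \<oplus> F e \<oplus> F f\<close> with \<open>W = V \<inter> {e, f}\<^sup>\<bottom>\<close>, and \<open>W\<close> has the same radical as \<open>V\<close>.\<close>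
locale hyperbolic_pair = alternating_form +
  fixes V :: "'a set" and e f :: 'a
  assumes V: "is_subspace F V" and e: "e \<in> V" and f: "f \<in> V" and ef: "B e f = 1"
begin

definition perp :: "'a set" where
  "perp = {x\<in>V. B x e = 0 \<and> B x f = 0}"

text \<open>The projection onto \<open>perp\<close> along \<open>F e \<oplus> F f\<close>.\<close>
definition proj :: "'a \<Rightarrow> 'a" where
  "proj y = y - B y f * e - B e y * f"

lemma V_closed: "0 \<in> V" "x \<in> V \<Longrightarrow> y \<in> V \<Longrightarrow> x + y \<in> V" "c \<in> F \<Longrightarrow> x \<in> V \<Longrightarrow> c * x \<in> V"
  using V unfolding is_subspace_def by auto

lemma fe: "B f e = 1" using ef sym by simp

lemma perp_iff: "x \<in> perp \<longleftrightarrow> x \<in> V \<and> B e x = 0 \<and> B f x = 0"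
  unfolding perp_def using sym by auto

lemma B_combination: "a \<in> F \<Longrightarrow> b \<in> F \<Longrightarrow> B x (w + a * e + b * f) = B x w + a * B x e + b * B x f"
  using add_right scale_right by simp

lemma proj_in_perp: "y \<in> V \<Longrightarrow> proj y \<in> perp"
proof -
  assume y: "y \<in> V"
  have "proj y \<in> V" unfolding proj_def using y e f values_in
    by (intro subspace_diff[OF subfield V] V_closed(3)) auto
  moreover have "B e (proj y) = 0" "B f (proj y) = 0"
    unfolding proj_def diff_right scale_right[OF values_in] using alternating ef fe sym by simp_all
  ultimately show ?thesis unfolding perp_iff by simp
qed

lemma proj_decomposition: "y = proj y + B y f * e + B e y * f"
  unfolding proj_def by simp

lemma perp_subspace: "is_subspace F perp"
  unfolding is_subspace_def
proof (intro conjI ballI)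
  show "0 \<in> perp" using V_closed(1) zero_right perp_iff by simp
next
  fix x y assume "x \<in> perp" "y \<in> perp"
  thus "x + y \<in> perp" using V_closed(2) add_right perp_iff by simp
next
  fix c x assume "c \<in> F" "x \<in> perp"
  thus "c * x \<in> perp" using V_closed(3) scale_right perp_iff by simp
qed

lemma radical_perp: "radical_in perp = radical_in V"
proof (intro equalityI subsetI)
  fix x assume x: "x \<in> radical_in perp"
  hence "x \<in> V" "B x e = 0" "B x f = 0" unfolding radical_in_def perp_def by auto
  moreover have "B x y = 0" if "y \<in> V" for y
  proof -
    have "B x (proj y) = 0" using x proj_in_perp[OF that] unfolding radical_in_def by blast
    hence "B x (proj y + B y f * e + B e y * f) = 0"
      using B_combination[OF values_in values_in] \<open>B x e = 0\<close> \<open>B x f = 0\<close> by simp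
    thus ?thesis by (metis proj_decomposition)
  qed
  ultimately show "x \<in> radical_in V" unfolding radical_in_def by blast
qed (use e f in \<open>auto simp: radical_in_def perp_def\<close>)

lemma card_perp: "card V = card perp * (card F * card F)"
proof -
  define h where "h = (\<lambda>(w, a, b). w + a * e + b * f)"
  have coords: "B e (h t) = snd (snd t)" "B f (h t) = fst (snd t)" if "t \<in> perp \<times> F \<times> F" for t
    using that B_combination alternating ef fe sym unfolding h_def perp_def by auto
  have "bij_betw h (perp \<times> (F \<times> F)) V"
    unfolding bij_betw_def
  proof
    show "inj_on h (perp \<times> F \<times> F)"
    proof (rule inj_onI)
      fix t t' assume t: "t \<in> perp \<times> F \<times> F" and t': "t' \<in> perp \<times> F \<times> F" and eq: "h t = h t'"
      have "snd t = snd t'" using coords[OF t] coords[OF t'] eq by (simp add: prod_eq_iff)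
      with eq show "t = t'" unfolding h_def by (cases t, cases t') auto
    qed
    show "h ` (perp \<times> F \<times> F) = V"
    proof (intro equalityI subsetI)
      fix y assume "y \<in> h ` (perp \<times> F \<times> F)"
      thus "y \<in> V" unfolding h_def perp_def using V_closed(2,3) e f by auto
    next
      fix y assume "y \<in> V"
      hence "y = h (proj y, B y f, B e y)" "(proj y, B y f, B e y) \<in> perp \<times> F \<times> F"
        using proj_in_perp values_in unfolding h_def by (auto simp: proj_def)
      thus "y \<in> h ` (perp \<times> F \<times> F)" by blast
    qed
  qed
  thus ?thesis by (simp add: bij_betw_same_card[symmetric] card_cartesian_product)
qed

lemma card_perp_less: "card perp < card V"
proof -
  have "e \<notin> perp" unfolding perp_def using ef by simp
  hence "perp \<subset> V" using e unfolding perp_def by blast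
  thus ?thesis by (simp add: psubset_card_mono)
qed

end

context alternating_form
begin

lemma radical_even_codim:
  assumes "is_subspace F V"
  shows "\<exists>t. card V = card (radical_in V) * card F ^ (2*t)"
  using assms
proof (induction "card V" arbitrary: V rule: less_induct)
  case less
  show ?case
  proof (cases "radical_in V = V")
    case True
    then show ?thesis by (intro exI[of _ 0]) simp
  next
    case False
    then obtain e f0 where e: "e \<in> V" "f0 \<in> V" "B e f0 \<noteq> 0" unfolding radical_in_def by blast
    define f where "f = inverse (B e f0) * f0"
    have f: "f \<in> V" unfolding f_def
      using less.prems inverse_in_F[OF values_in] e(2) unfolding is_subspace_def by blast
    have ef: "B e f = 1" unfolding f_def using scale_right[OF inverse_in_F[OF values_in]] e(3) by simp
    interpret hyperbolic_pair F B V e f by unfold_locales (use less.prems e(1) f ef in auto)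
    obtain t where "card perp = card (radical_in perp) * card F ^ (2 * t)"
      using less.hyps[OF card_perp_less perp_subspace] by blast
    hence "card V = card (radical_in V) * card F ^ (2 * Suc t)"
      using radical_perp card_perp by (simp add: power_add power_mult_distrib)
    thus ?thesis by blast
  qed
qed

end

section \<open>The setting: \<open>F\<^sub>2\<^sub>^\<^sub>n\<close>, its subfield \<open>F\<^sub>2\<^sub>^\<^sub>d\<close> and the relative trace\<close>

locale binary_field =
  fixes field_type :: "'a::{finite,field} itself" and n k d s :: nat
  assumes card_field: "card (UNIV :: 'a set) = 2 ^ n"
    and n_pos: "0 < n" and k_pos: "0 < k" and k_less_n: "k < n"
    and d_def: "d = gcd n k" and s_def: "s = n div d"
begin

lemma two: "(2::'a) = 0" using finite_field_char2[OF card_field n_pos] .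

lemma d_pos: "0 < d" using d_def n_pos by simp
lemma d_dvd_k: "d dvd k" using d_def by simp
lemma n_eq: "n = d * s" using s_def d_def by simp
lemma s_pos: "0 < s" using n_eq n_pos by (cases s) auto

lemma frobenius_n: "(x::'a) ^ (2 ^ (n * t)) = x"
  using finite_field_frobenius_period[OF card_field] .

lemma pow_n_minus_1: "((x::'a) ^ (2 ^ (j * (n - 1)))) ^ (2 ^ j) = x"
proof -
  have "j * (n - 1) + j = n * j" using n_pos by (cases n) (auto simp: algebra_simps)
  thus ?thesis by (simp only: pow2_pow2 frobenius_n)
qed

abbreviation F :: "'a set" where "F \<equiv> subfield_fix d"

lemma F_iff: "x \<in> F \<longleftrightarrow> x ^ (2^d) = x" unfolding subfield_fix_def by simp

lemma F_pow: assumes "x \<in> F" "d dvd j" shows "x ^ (2 ^ j) = x"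
proof -
  obtain t where "j = d * t" using assms(2) by blast
  moreover have "x ^ (2 ^ (d * t)) = x" for t
  proof (induction t)
    case (Suc t)
    have "x ^ (2 ^ (d * Suc t)) = (x ^ (2 ^ (d * t))) ^ (2 ^ d)" by (simp add: pow2_pow2 add.commute)
    then show ?case using Suc assms(1) F_iff by simp
  qed simp
  ultimately show ?thesis by simp
qed

lemma subfield_F: "is_subfield F"
  unfolding is_subfield_def subfield_fix_def
  by (simp add: char2_pow2_add[OF two] power_mult_distrib power_inverse char2_minus[OF two])

text \<open>The fixed field of \<open>x \<mapsto> x^(2^k)\<close> is \<open>F\<^sub>2\<^sub>^\<^sub>d\<close>, as \<open>d = gcd n k\<close> (Bezout).\<close>
lemma fixed_field_k: "{x::'a. x ^ (2^k) = x} = F"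
proof (intro equalityI subsetI)
  fix x :: 'a assume "x \<in> {x. x ^ (2^k) = x}"
  hence xk: "x ^ (2^k) = x" by simp
  have kx: "x ^ (2 ^ (k * t)) = x" for t
  proof (induction t)
    case (Suc t)
    have "x ^ (2 ^ (k * Suc t)) = (x ^ (2 ^ (k * t))) ^ (2 ^ k)" by (simp add: pow2_pow2 add.commute)
    then show ?case using Suc xk by simp
  qed simp
  obtain X Y where "k * X = n * Y + gcd k n" using bezout_nat[of k n] k_pos by auto
  hence XY: "k * X = n * Y + d" using d_def by (simp add: gcd.commute)
  have "x = x ^ (2 ^ (k * X))" using kx by simp
  also have "\<dots> = (x ^ (2 ^ (n * Y))) ^ (2 ^ d)" unfolding XY by (simp add: pow2_pow2)
  also have "\<dots> = x ^ (2^d)" using frobenius_n by simp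
  finally show "x \<in> F" using F_iff by simp
qed (use F_pow d_dvd_k in simp)

abbreviation Tr :: "'a \<Rightarrow> 'a" where "Tr \<equiv> rel_trace d s"

lemma Tr_add: "Tr (x + y) = Tr x + Tr y"
  unfolding rel_trace_def by (simp add: char2_pow2_add[OF two] sum.distrib)

lemma Tr_diff: "Tr (x - y) = Tr x - Tr y"
  unfolding rel_trace_def by (simp add: char2_pow2_diff[OF two] sum_subtractf)

lemma Tr_zero: "Tr 0 = 0" unfolding rel_trace_def by (simp add: power_0_left)

lemma Tr_frobenius_d: "Tr (y ^ (2^d)) = Tr y"
proof -
  have "Tr (y ^ (2^d)) - Tr y = (\<Sum>i<s. y ^ (2^(d * Suc i)) - y ^ (2^(d*i)))"
    unfolding rel_trace_def by (simp add: pow2_pow2 sum_subtractf add.commute)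
  also have "\<dots> = y ^ (2^(d*s)) - y" using sum_lessThan_telescope[of "\<lambda>i. y ^ (2^(d*i))" s] by simp
  also have "\<dots> = 0" using frobenius_n[of y 1] n_eq by simp
  finally show ?thesis by simp
qed

lemma Tr_in_F: "Tr z \<in> F"
proof -
  have "(Tr z) ^ (2^d) = Tr (z ^ (2^d))"
    unfolding rel_trace_def char2_pow2_sum[OF two] by (simp add: pow2_pow2 add.commute)
  thus ?thesis using Tr_frobenius_d F_iff by simp
qed

lemma Tr_pow: "d dvd j \<Longrightarrow> Tr (z ^ (2^j)) = Tr z"
proof -
  assume "d dvd j"
  have "Tr (z ^ (2^j)) = (Tr z) ^ (2^j)"
    unfolding rel_trace_def char2_pow2_sum[OF two] by (simp add: pow2_pow2 add.commute)
  thus ?thesis using F_pow[OF Tr_in_F \<open>d dvd j\<close>] by simp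
qed

lemma Tr_scale: "c \<in> F \<Longrightarrow> Tr (c * z) = c * Tr z"
  unfolding rel_trace_def by (simp add: power_mult_distrib F_pow sum_distrib_left)

text \<open>\<open>Tr\<close> is a linearized polynomial of \<open>2^d\<close>-degree \<open>s - 1\<close>, so its kernel is small.\<close>
lemma Tr_kernel_card: "card {x::'a. Tr x = 0} \<le> card F ^ (s - 1)"
proof -
  have "Tr x = (\<Sum>i\<le>s-1. (\<lambda>_. 1::'a) i * x ^ (2^(d*i)))" for x
    unfolding rel_trace_def using s_pos by (simp add: lessThan_Suc_atMost[symmetric])
  hence "{x::'a. Tr x = 0} = {x. (\<Sum>i\<le>s-1. (\<lambda>_. 1::'a) i * x ^ (2^(d*i))) = 0}" by simp
  also have "card \<dots> \<le> card {x::'a. x ^ (2^d) = x} ^ (s - 1)"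
    by (rule linearized_root_bound[OF two]) simp
  finally show ?thesis unfolding subfield_fix_def by simp
qed

text \<open>\<open>F\<close> has exactly \<open>2^d\<close> elements: at most \<open>2^d\<close> as the roots of \<open>x^(2^d) - x\<close>, at least
  \<open>2^d\<close> since the additive map \<open>y \<mapsto> y^(2^d) - y\<close> with kernel \<open>F\<close> maps into \<open>ker Tr\<close>.\<close>
lemma card_F: "card F = 2 ^ d"
proof (rule antisym)
  define p :: "'a poly" where "p = monom 1 (2^d) - [:0, 1:]"
  have "2^d \<noteq> (1::nat)" using d_pos by simp
  hence "coeff p (2^d) = 1" unfolding p_def by (simp add: coeff_pCons split: nat.split)
  hence p0: "p \<noteq> 0" by auto
  have "degree p \<le> 2^d" unfolding p_def
    by (rule degree_diff_le) (auto simp: degree_monom_le intro: order.trans[OF _ one_le_power])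
  moreover have "F = {x. poly p x = 0}" unfolding p_def subfield_fix_def by (simp add: poly_monom)
  ultimately show "card F \<le> 2^d" using card_poly_roots_bound[OF p0] by simp
next
  define g where "g y = y ^ (2^d) - y" for y :: 'a
  have g_add: "g (x + y) = g x + g y" for x y unfolding g_def char2_pow2_add[OF two] by simp
  have g_kernel: "{y. g y = 0} = F" unfolding g_def subfield_fix_def by auto
  have "range g \<subseteq> {x. Tr x = 0}" unfolding g_def using Tr_diff Tr_frobenius_d by auto
  hence "card (range g) \<le> card F ^ (s - 1)" using Tr_kernel_card by (meson card_mono finite order_trans)
  hence "2 ^ n \<le> card F * card F ^ (s - 1)"
    using additive_card_kernel_image[of g, OF g_add] g_kernel card_field by simp
  also have "\<dots> = card F ^ s" using s_pos by (simp add: power_eq_if)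
  finally have "(2^d) ^ s \<le> card F ^ s" using n_eq by (simp add: power_mult)
  thus "2^d \<le> card F" using s_pos power_mono_iff[of "2^d" "card F" s] by simp
qed

lemma card_F_ge_2: "2 \<le> card F"
  using card_F d_pos by (simp add: self_le_power)

lemma card_field_F: "card (UNIV::'a set) = card F ^ s"
  using card_field card_F n_eq by (simp add: power_mult)

lemma Tr_nondegenerate: "z \<noteq> 0 \<Longrightarrow> \<exists>y. Tr (y * z) \<noteq> 0"
proof -
  assume z: "z \<noteq> 0"
  have "card {x::'a. Tr x = 0} \<le> card F ^ (s - 1)" by (rule Tr_kernel_card)
  also have "\<dots> < card F ^ s" using s_pos card_F_ge_2 by (intro power_strict_increasing) auto
  finally have "{x::'a. Tr x = 0} \<noteq> UNIV" using card_field_F by auto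
  then obtain w where "Tr w \<noteq> 0" by auto
  hence "Tr ((w / z) * z) \<noteq> 0" using z by simp
  thus ?thesis by blast
qed

end

section \<open>The bilinear form and its radical\<close>

context binary_field
begin

text \<open>The adjoint map: \<open>B\<^sub>\<alpha>\<^sub>\<beta>(x, y) = Tr (y \<cdot> L \<alpha> \<beta> x)\<close>.  The exponents \<open>2^(j (n-1))\<close> act as the
  inverse Frobenius powers \<open>x \<mapsto> x^(2^-j)\<close> on \<open>F\<^sub>2\<^sub>^\<^sub>n\<close>.\<close>
definition L :: "'a \<Rightarrow> 'a \<Rightarrow> 'a \<Rightarrow> 'a" where
  "L \<alpha> \<beta> x = \<alpha> * x^(2^(2*k)) + \<beta> * x^(2^k) + (\<alpha>*x)^(2^(2*k*(n-1))) + (\<beta>*x)^(2^(k*(n-1)))"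

lemma pow2_plus1_expand:
  "((x::'a) + y) ^ (2^j + 1) = x ^ (2^j + 1) + y ^ (2^j + 1) + (x^(2^j) * y + x * y^(2^j))"
proof -
  have "(x + y) ^ (2^j + 1) = (x^(2^j) + y^(2^j)) * (x + y)" by (simp add: char2_pow2_add[OF two])
  thus ?thesis by (simp add: algebra_simps)
qed

text \<open>Polarization of \<open>f\<^sub>\<alpha>\<^sub>\<beta>\<close>: only the cross terms of \<open>(x + y)^(2^j + 1)\<close> survive.\<close>
lemma B_expand:
  "B_ab d s k \<alpha> \<beta> x y = Tr (\<alpha> * (x^(2^(2*k)) * y) + \<alpha> * (x * y^(2^(2*k)))
     + \<beta> * (x^(2^k) * y) + \<beta> * (x * y^(2^k)))"
proof -
  have "\<alpha> * (x + y) ^ (2 ^ (2 * k) + 1) + \<beta> * (x + y) ^ (2 ^ k + 1)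
     = (\<alpha> * x ^ (2 ^ (2 * k) + 1) + \<beta> * x ^ (2 ^ k + 1)) + (\<alpha> * y ^ (2 ^ (2 * k) + 1) + \<beta> * y ^ (2 ^ k + 1))
       + (\<alpha> * (x^(2^(2*k)) * y) + \<alpha> * (x * y^(2^(2*k))) + \<beta> * (x^(2^k) * y) + \<beta> * (x * y^(2^k)))"
    unfolding pow2_plus1_expand by (simp add: algebra_simps)
  thus ?thesis unfolding B_ab_def f_ab_def by (simp add: Tr_add)
qed

lemma Tr_adjoint:
  assumes "d dvd j"
  shows "Tr (a * (x * y^(2^j))) = Tr (y * (a*x)^(2^(j*(n-1))))"
proof -
  have "Tr (y * (a*x)^(2^(j*(n-1)))) = Tr ((y * (a*x)^(2^(j*(n-1)))) ^ (2^j))"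
    using Tr_pow[OF assms] by simp
  also have "(y * (a*x)^(2^(j*(n-1)))) ^ (2^j) = y^(2^j) * ((a*x)^(2^(j*(n-1))))^(2^j)"
    by (rule power_mult_distrib)
  also have "\<dots> = a * (x * y^(2^j))" by (simp only: pow_n_minus_1) (simp add: ac_simps)
  finally show ?thesis by simp
qed

lemma B_eq_Tr_L: "B_ab d s k \<alpha> \<beta> x y = Tr (y * L \<alpha> \<beta> x)"
proof -
  have "B_ab d s k \<alpha> \<beta> x y = Tr (y * (\<alpha> * x^(2^(2*k)))) + Tr (\<alpha> * (x * y^(2^(2*k))))
      + Tr (y * (\<beta> * x^(2^k))) + Tr (\<beta> * (x * y^(2^k)))"
    unfolding B_expand by (simp add: Tr_add ac_simps)
  also have "\<dots> = Tr (y * (\<alpha> * x^(2^(2*k)))) + Tr (y * (\<alpha>*x)^(2^(2*k*(n-1))))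
      + Tr (y * (\<beta> * x^(2^k))) + Tr (y * (\<beta>*x)^(2^(k*(n-1))))"
    using d_dvd_k by (simp only: Tr_adjoint dvd_mult)
  also have "\<dots> = Tr (y * L \<alpha> \<beta> x)"
    unfolding L_def by (simp only: distrib_left Tr_add ac_simps)
  finally show ?thesis .
qed

lemma alternating_form_B: "alternating_form F (B_ab d s k (\<alpha>::'a) \<beta>)"
proof
  show "is_subfield F" by (rule subfield_F)
  show "B_ab d s k \<alpha> \<beta> x y = B_ab d s k \<alpha> \<beta> y x" for x y
    unfolding B_ab_def by (simp add: add.commute diff_diff_eq)
  show "B_ab d s k \<alpha> \<beta> x x = 0" for x
  proof -
    have "f_ab d s k \<alpha> \<beta> 0 = 0" unfolding f_ab_def by (simp add: power_0_left Tr_zero)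
    thus ?thesis unfolding B_ab_def char2_add_self[OF two] char2_diff[OF two]
      by (simp add: char2_add_self[OF two])
  qed
  show "B_ab d s k \<alpha> \<beta> x (y + z) = B_ab d s k \<alpha> \<beta> x y + B_ab d s k \<alpha> \<beta> x z" for x y z
    unfolding B_eq_Tr_L by (simp add: distrib_right Tr_add)
  show "c \<in> F \<Longrightarrow> B_ab d s k \<alpha> \<beta> x (c * y) = c * B_ab d s k \<alpha> \<beta> x y" for x y c
    unfolding B_eq_Tr_L by (simp add: Tr_scale mult.assoc)
  show "B_ab d s k \<alpha> \<beta> x y \<in> F" for x y
    unfolding B_eq_Tr_L by (rule Tr_in_F)
qed

text \<open>By nondegeneracy of the trace form, the radical of \<open>B\<^sub>\<alpha>\<^sub>\<beta>\<close> is the kernel of \<open>L \<alpha> \<beta>\<close>.\<close>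
lemma radical_eq_kernel: "radical_ab d s k \<alpha> \<beta> = {x. L \<alpha> \<beta> x = 0}"
proof -
  have "(\<forall>y. Tr (y * L \<alpha> \<beta> x) = 0) \<longleftrightarrow> L \<alpha> \<beta> x = 0" for x
    using Tr_nondegenerate[of "L \<alpha> \<beta> x"] by (auto simp: Tr_zero)
  thus ?thesis unfolding radical_ab_def B_eq_Tr_L by simp
qed

lemma L_add: "L (\<alpha> + \<alpha>') (\<beta> + \<beta>') x = L \<alpha> \<beta> x + L \<alpha>' \<beta>' x"
proof -
  have "L (\<alpha> + \<alpha>') (\<beta> + \<beta>') x = (\<alpha> * x^(2^(2*k)) + \<alpha>' * x^(2^(2*k))) + (\<beta> * x^(2^k) + \<beta>' * x^(2^k))
     + ((\<alpha>*x)^(2^(2*k*(n-1))) + (\<alpha>'*x)^(2^(2*k*(n-1)))) + ((\<beta>*x)^(2^(k*(n-1))) + (\<beta>'*x)^(2^(k*(n-1))))"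
    unfolding L_def by (simp only: distrib_right char2_pow2_add[OF two])
  thus ?thesis unfolding L_def by (simp only: ac_simps)
qed

lemma L_pow: "(L \<alpha> \<beta> x)^(2^(2*k))
  = \<alpha> * x + \<beta>^(2^k) * x^(2^k) + \<beta>^(2^(2*k)) * x^(2^(k*3)) + \<alpha>^(2^(2*k)) * x^(2^(k*4))"
proof -
  have t1: "(\<alpha> * x^(2^(2*k)))^(2^(2*k)) = \<alpha>^(2^(2*k)) * x^(2^(k*4))"
    by (simp add: power_mult_distrib pow2_pow2) (simp add: algebra_simps)
  have t2: "(\<beta> * x^(2^k))^(2^(2*k)) = \<beta>^(2^(2*k)) * x^(2^(k*3))"
    by (simp add: power_mult_distrib pow2_pow2) (simp add: algebra_simps)
  have t3: "((\<alpha>*x)^(2^(2*k*(n-1))))^(2^(2*k)) = \<alpha> * x"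
    by (rule pow_n_minus_1)
  have t4: "((\<beta>*x)^(2^(k*(n-1))))^(2^(2*k)) = \<beta>^(2^k) * x^(2^k)"
  proof -
    have "((\<beta>*x)^(2^(k*(n-1))))^(2^(2*k)) = (((\<beta>*x)^(2^(k*(n-1))))^(2^k))^(2^k)"
      by (simp only: pow2_pow2 mult_2 add.assoc)
    also have "\<dots> = (\<beta>*x)^(2^k)" by (simp only: pow_n_minus_1)
    finally show ?thesis by (simp only: power_mult_distrib)
  qed
  show ?thesis
    unfolding L_def char2_pow2_add[OF two] t1 t2 t3 t4 by (simp only: ac_simps)
qed

lemma L_kernel_bound:
  fixes \<alpha> \<beta> :: 'a
  assumes ab: "(\<alpha>, \<beta>) \<noteq> (0, 0)"
  shows "card {x. L \<alpha> \<beta> x = 0} \<le> card F ^ 4"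
proof -
  define a where "a i = (if i = 0 then \<alpha> else if i = 1 then \<beta>^(2^k) else if i = 3 then \<beta>^(2^(2*k))
      else if i = 4 then \<alpha>^(2^(2*k)) else 0)" for i :: nat
  have "{x. L \<alpha> \<beta> x = 0} = {x. (L \<alpha> \<beta> x)^(2^(2*k)) = 0}" by simp
  also have "\<dots> = {x. (\<Sum>i\<le>4. a i * x^(2^(k*i))) = 0}"
    unfolding L_pow a_def by (simp add: eval_nat_numeral ac_simps)
  finally have kernel: "{x. L \<alpha> \<beta> x = 0} = {x. (\<Sum>i\<le>4. a i * x^(2^(k*i))) = 0}" .
  show ?thesis
  proof (cases "\<alpha> = 0")
    case False
    hence "card {x. (\<Sum>i\<le>4. a i * x^(2^(k*i))) = 0} \<le> card {x::'a. x^(2^k) = x} ^ 4"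
      by (intro linearized_root_bound[OF two]) (simp add: a_def)
    thus ?thesis unfolding kernel fixed_field_k .
  next
    case True
    hence "\<beta> \<noteq> 0" using ab by simp
    have "(\<Sum>i\<le>4. a i * x^(2^(k*i))) = (\<Sum>i\<le>3. a i * x^(2^(k*i)))" for x
      using True by (simp add: a_def eval_nat_numeral power_0_left)
    hence "card {x. (\<Sum>i\<le>4. a i * x^(2^(k*i))) = 0} \<le> card {x::'a. x^(2^k) = x} ^ 3"
      using linearized_root_bound[OF two, of a 3 k] \<open>\<beta> \<noteq> 0\<close> by (simp add: a_def)
    also have "\<dots> \<le> card F ^ 4"
      unfolding fixed_field_k using card_F_ge_2 by (simp add: power_increasing)
    finally show ?thesis unfolding kernel .
  qed
qed

text \<open>The radical of \<open>B\<^sub>\<alpha>\<^sub>\<beta>\<close> has \<open>F\<close>-dimension 1 or 3: it is odd because the radical of an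
  alternating form has even codimension in the odd-dimensional space, and at most 4 by the
  kernel bound.\<close>
lemma radical_dimension:
  fixes \<alpha> \<beta> :: 'a
  assumes ab: "(\<alpha>, \<beta>) \<noteq> (0, 0)" and odd: "odd s"
  obtains m where "card (radical_ab d s k \<alpha> \<beta>) = card F ^ m" and "m = 1 \<or> m = 3"
proof -
  let ?R = "radical_ab d s k \<alpha> \<beta>"
  interpret B: alternating_form F "B_ab d s k \<alpha> \<beta>" by (rule alternating_form_B)
  have "B.radical_in UNIV = ?R" unfolding B.radical_in_def radical_ab_def by simp
  have "is_subspace F ?R" using B.radical_subspace \<open>B.radical_in UNIV = ?R\<close> by simp
  then obtain m where m: "card ?R = card F ^ m" using subspace_card_power[OF subfield_F] by blast
  have "is_subspace F (UNIV::'a set)" unfolding is_subspace_def by simp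
  then obtain t where "card (UNIV::'a set) = card (B.radical_in UNIV) * card F ^ (2*t)"
    using B.radical_even_codim by blast
  hence "card F ^ s = card F ^ (m + 2*t)"
    unfolding card_field_F \<open>B.radical_in UNIV = ?R\<close> m by (simp add: power_add)
  hence "s = m + 2*t" using card_F_ge_2 by simp
  moreover have "card F ^ m \<le> card F ^ 4" using L_kernel_bound[OF ab] m radical_eq_kernel by simp
  hence "m \<le> 4" using card_F_ge_2 by (simp add: power_le_imp_le_exp)
  ultimately have "m = 1 \<or> m = 3" using odd by presburger
  with m that show ?thesis by blast
qed

text \<open>For \<open>\<alpha> = 0\<close> and \<open>x \<noteq> 0\<close>, \<open>L 0 \<beta> x\<close> vanishes for at most \<open>q\<^sub>0\<close> values of \<open>\<beta>\<close>: its
  \<open>2^k\<close>-th power is a \<open>2^k\<close>-linearized polynomial of degree 1 in \<open>\<beta>\<close>.\<close>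
lemma L_beta_kernel_bound:
  assumes x: "x \<noteq> 0"
  shows "card {b. L 0 b x = 0} \<le> card F"
proof -
  define a where "a i = (if i = 0 then x else x^(2^(2*k)))" for i :: nat
  have pow: "(L 0 b x)^(2^k) = (\<Sum>i\<le>1. a i * b^(2^(k*i)))" for b
  proof -
    have "L 0 b x = b * x^(2^k) + (b*x)^(2^(k*(n-1)))" unfolding L_def by (simp add: power_0_left)
    moreover have "((b*x)^(2^(k*(n-1))))^(2^k) = b * x" by (rule pow_n_minus_1)
    moreover have "(b * x^(2^k))^(2^k) = b^(2^k) * x^(2^(2*k))"
      by (simp add: power_mult_distrib pow2_pow2 mult_2)
    ultimately have "(L 0 b x)^(2^k) = b^(2^k) * x^(2^(2*k)) + b * x"
      by (simp only: char2_pow2_add[OF two])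
    thus ?thesis unfolding a_def by (simp add: ac_simps)
  qed
  have "{b. L 0 b x = 0} = {b. (L 0 b x)^(2^k) = 0}" by simp
  also have "\<dots> = {b. (\<Sum>i\<le>1. a i * b^(2^(k*i))) = 0}" unfolding pow ..
  also have "card \<dots> \<le> card {x::'a. x^(2^k) = x} ^ 1"
    by (rule linearized_root_bound[OF two]) (simp add: a_def x)
  finally show ?thesis unfolding fixed_field_k by simp
qed

text \<open>For fixed \<open>x \<noteq> 0\<close>, the image of the additive map \<open>(\<alpha>, \<beta>) \<mapsto> L \<alpha> \<beta> x\<close> is the hyperplane
  \<open>{z. Tr (x z) = 0}\<close>: it is contained in it as \<open>B(x, x) = 0\<close>, and it is not smaller, since
  the restriction to \<open>\<alpha> = 0\<close> already has a kernel of size at most \<open>q\<^sub>0\<close>.\<close>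
lemma L_image_card:
  assumes x: "x \<noteq> 0"
  shows "card (range (\<lambda>p::'a \<times> 'a. L (fst p) (snd p) x)) = card F ^ (s - 1)"
proof -
  let ?\<Phi> = "\<lambda>p::'a \<times> 'a. L (fst p) (snd p) x"
  have "range ?\<Phi> \<subseteq> (\<lambda>w. w / x) ` {w. Tr w = 0}"
  proof
    fix z assume "z \<in> range ?\<Phi>"
    then obtain p where "z = ?\<Phi> p" by auto
    hence "Tr (x * z) = 0"
      using B_eq_Tr_L[of "fst p" "snd p" x x] alternating_form.alternating[OF alternating_form_B] by simp
    thus "z \<in> (\<lambda>w. w / x) ` {w. Tr w = 0}" using x by (auto intro!: image_eqI[where x="x * z"])
  qed
  hence upper: "card (range ?\<Phi>) \<le> card F ^ (s - 1)"
    using Tr_kernel_card by (meson card_image_le card_mono finite order_trans)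
  define g where "g b = L 0 b x" for b
  have g_add: "g (a + b) = g a + g b" for a b unfolding g_def using L_add[of 0 0 a b x] by simp
  have "card F * card F ^ (s - 1) = card F ^ s" using s_pos by (cases s) simp_all
  also have "\<dots> = card {b. g b = 0} * card (range g)"
    using additive_card_kernel_image[of g, OF g_add] card_field_F by simp
  also have "\<dots> \<le> card F * card (range ?\<Phi>)"
  proof (rule mult_mono)
    show "card {b. g b = 0} \<le> card F" unfolding g_def by (rule L_beta_kernel_bound[OF x])
    have "g b \<in> range ?\<Phi>" for b unfolding g_def by (rule range_eqI[of _ _ "(0, b)"]) simp
    thus "card (range g) \<le> card (range ?\<Phi>)" by (intro card_mono) auto
  qed simp_all
  finally have "card F ^ (s - 1) \<le> card (range ?\<Phi>)" using card_F_ge_2 by simp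
  thus ?thesis using upper by simp
qed

lemma point_kernel_card:
  assumes x: "x \<noteq> 0"
  shows "card {p::'a \<times> 'a. L (fst p) (snd p) x = 0} = card F ^ (s + 1)"
proof -
  let ?\<Phi> = "\<lambda>p::'a \<times> 'a. L (fst p) (snd p) x"
  have \<Phi>_add: "?\<Phi> (p + q) = ?\<Phi> p + ?\<Phi> q" for p q by (simp add: L_add)
  have "card (UNIV :: ('a \<times> 'a) set) = card F ^ (s + s)"
    unfolding UNIV_Times_UNIV[symmetric] card_cartesian_product card_field_F by (simp add: power_add)
  also have "s + s = (s + 1) + (s - 1)" using s_pos by simp
  finally have card_pairs: "card (UNIV :: ('a \<times> 'a) set) = card F ^ (s + 1) * card F ^ (s - 1)"
    by (simp only: power_add)
  have kernel_eq: "card F ^ (s + 1) * card F ^ (s - 1) = card {p. ?\<Phi> p = 0} * card F ^ (s - 1)"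
    using additive_card_kernel_image[of ?\<Phi>, OF \<Phi>_add] unfolding card_pairs L_image_card[OF x] .
  have "card F ^ (s - 1) \<noteq> 0" using card_F_ge_2 by (intro power_not_zero) linarith
  from iffD1[OF mult_right_cancel[OF this] kernel_eq] show ?thesis by (rule sym)
qed

end

section \<open>Counting the ranks\<close>

lemma fdim_eqI: "1 < card K \<Longrightarrow> card W = card K ^ m \<Longrightarrow> fdim K W = m"
  unfolding fdim_def by (rule the_equality) auto

context binary_field
begin

text \<open>Excluding \<open>k \<in> {n/3, 2n/3}\<close> and \<open>s = 1\<close> (impossible for \<open>0 < k < n\<close>) leaves \<open>s > 3\<close>,
  so the ranks \<open>s - 1\<close> and \<open>s - 3\<close> are distinct.\<close>
lemma s_gt_3:
  assumes "3 * k \<noteq> n" and "3 * k \<noteq> 2 * n" and "odd s"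
  shows "3 < s"
proof -
  obtain j where j: "k = d * j" using d_dvd_k by blast
  have "j < s" using k_less_n n_eq j d_pos by (metis mult_less_cancel1)
  moreover have "0 < j" using k_pos j by (cases j) auto
  moreover have "s \<noteq> 3"
  proof
    assume "s = 3"
    hence "j = 1 \<or> j = 2" using \<open>j < s\<close> \<open>0 < j\<close> by auto
    thus False using assms(1,2) n_eq j \<open>s = 3\<close> by auto
  qed
  ultimately show ?thesis using assms(3) by presburger
qed

lemma rank_radical_dimension:
  fixes \<alpha> \<beta> :: 'a
  assumes ab: "(\<alpha>, \<beta>) \<noteq> (0, 0)" and "odd s"
  obtains m where "rank_ab d s k \<alpha> \<beta> = s - m" and "card (radical_ab d s k \<alpha> \<beta>) = card F ^ m"
    and "m = 1 \<or> m = 3"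
proof -
  obtain m where m: "card (radical_ab d s k \<alpha> \<beta>) = card F ^ m" "m = 1 \<or> m = 3"
    using radical_dimension[OF assms] by blast
  moreover have "rank_ab d s k \<alpha> \<beta> = s - m"
    unfolding rank_ab_def using fdim_eqI[OF _ m(1)] card_F_ge_2 by simp
  ultimately show ?thesis using that by blast
qed

lemma rank_class_eq:
  assumes "odd s" and "3 < s" and "m = 1 \<or> m = 3"
  shows "{(\<alpha>::'a, \<beta>::'a). (\<alpha>, \<beta>) \<noteq> (0, 0) \<and> rank_ab d s k \<alpha> \<beta> = s - m}
       = {p. p \<noteq> (0, 0) \<and> card (radical_ab d s k (fst p) (snd p)) = card F ^ m}"
proof (rule set_eqI)
  fix p :: "'a \<times> 'a"
  obtain \<alpha> \<beta> where p: "p = (\<alpha>, \<beta>)" by fastforce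
  have "card F ^ 1 \<noteq> card F ^ 3"
    using card_F_ge_2 power_strict_increasing[of 1 3 "card F"] by simp
  moreover have "s - 1 \<noteq> s - 3" using assms(2) by simp
  ultimately
  have "rank_ab d s k \<alpha> \<beta> = s - m \<longleftrightarrow> card (radical_ab d s k \<alpha> \<beta>) = card F ^ m"
    if "(\<alpha>, \<beta>) \<noteq> (0, 0)"
    using rank_radical_dimension[OF that assms(1)] assms(3) by metis
  thus "p \<in> {(\<alpha>, \<beta>). (\<alpha>, \<beta>) \<noteq> (0, 0) \<and> rank_ab d s k \<alpha> \<beta> = s - m}
      \<longleftrightarrow> p \<in> {p. p \<noteq> (0, 0) \<and> card (radical_ab d s k (fst p) (snd p)) = card F ^ m}"
    unfolding p by auto
qed

lemma card_nonzero_pairs: "card {p::'a \<times> 'a. p \<noteq> (0, 0)} + 1 = card F ^ (2 * s)"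
proof -
  have "card (UNIV :: ('a \<times> 'a) set) = card F ^ (2 * s)"
    unfolding UNIV_Times_UNIV[symmetric] card_cartesian_product card_field_F
    by (simp add: power_add mult_2)
  moreover have "card (UNIV :: ('a \<times> 'a) set) = card (insert (0, 0) {p::'a \<times> 'a. p \<noteq> (0, 0)})"
    by (rule arg_cong[where f = card]) auto
  ultimately show ?thesis by simp
qed

text \<open>Double counting of the incidences \<open>((\<alpha>, \<beta>), x)\<close> with \<open>x \<noteq> 0\<close> and \<open>L \<alpha> \<beta> x = 0\<close>:
  the radicals of all nonzero pairs contain \<open>(q\<^sub>0^s - 1)(q\<^sub>0^(s+1) - 1)\<close> nonzero vectors in total.\<close>
lemma incidence_count:
  "(\<Sum>p\<in>{p::'a \<times> 'a. p \<noteq> (0, 0)}. card (radical_ab d s k (fst p) (snd p)))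
   = card {p::'a \<times> 'a. p \<noteq> (0, 0)} + (card F ^ s - 1) * (card F ^ (s + 1) - 1)"
proof -
  let ?P = "{p::'a \<times> 'a. p \<noteq> (0, 0)}" and ?X = "{x::'a. x \<noteq> 0}"
  let ?I = "\<lambda>p. {x. x \<noteq> 0 \<and> L (fst p) (snd p) x = 0}"
  let ?J = "\<lambda>x. {p. p \<noteq> (0, 0) \<and> L (fst p) (snd p) x = 0}"
  have L_zero: "L \<alpha> \<beta> 0 = 0" "L 0 0 x = 0" for \<alpha> \<beta> x unfolding L_def by (simp_all add: power_0_left)
  have "card (UNIV :: 'a set) = card (insert 0 ?X)" by (rule arg_cong[where f = card]) auto
  hence card_X: "card ?X = card F ^ s - 1" using card_field_F by simp
  have radical_card: "card (radical_ab d s k (fst p) (snd p)) = card (?I p) + 1" for p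
  proof -
    have "radical_ab d s k (fst p) (snd p) = insert 0 (?I p)" unfolding radical_eq_kernel using L_zero by auto
    thus ?thesis by simp
  qed
  have "(\<Sum>p\<in>?P. card (radical_ab d s k (fst p) (snd p))) = (\<Sum>p\<in>?P. card (?I p) + 1)"
    unfolding radical_card ..
  also have "\<dots> = card ?P + (\<Sum>p\<in>?P. card (?I p))"
    by (simp only: sum.distrib card_eq_sum add.commute)
  also have "(\<Sum>p\<in>?P. card (?I p)) = card (Sigma ?P ?I)" by (rule card_SigmaI[symmetric]) auto
  also have "Sigma ?P ?I = prod.swap ` Sigma ?X ?J" by auto
  hence "card (Sigma ?P ?I) = card (Sigma ?X ?J)" by (simp add: card_image)
  also have "\<dots> = (\<Sum>x\<in>?X. card (?J x))" by (rule card_SigmaI) auto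
  also have "\<dots> = (\<Sum>x\<in>?X. card F ^ (s + 1) - 1)"
  proof (rule sum.cong[OF refl])
    fix x assume "x \<in> ?X"
    hence "card {p::'a \<times> 'a. L (fst p) (snd p) x = 0} = card F ^ (s + 1)" by (simp add: point_kernel_card)
    moreover have "{p::'a \<times> 'a. L (fst p) (snd p) x = 0} = insert (0, 0) (?J x)" using L_zero by auto
    ultimately show "card (?J x) = card F ^ (s + 1) - 1" by simp
  qed
  also have "\<dots> = (card F ^ s - 1) * (card F ^ (s + 1) - 1)" using card_X by simp
  finally show ?thesis .
qed

lemma rank_count_equations:
  assumes "odd s" and "3 < s"
    and N1: "N\<^sub>1 = card {(\<alpha>::'a, \<beta>::'a). (\<alpha>, \<beta>) \<noteq> (0, 0) \<and> rank_ab d s k \<alpha> \<beta> = s - 1}"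
    and N3: "N\<^sub>3 = card {(\<alpha>::'a, \<beta>::'a). (\<alpha>, \<beta>) \<noteq> (0, 0) \<and> rank_ab d s k \<alpha> \<beta> = s - 3}"
  shows "N\<^sub>1 + N\<^sub>3 + 1 = card F ^ (2 * s)"
    and "real N\<^sub>1 * card F + real N\<^sub>3 * card F ^ 3
         = real (card F) ^ (2 * s) - 1 + (real (card F) ^ s - 1) * (real (card F) ^ (s + 1) - 1)"
proof -
  let ?P = "{p::'a \<times> 'a. p \<noteq> (0, 0)}"
  let ?c = "\<lambda>p. card (radical_ab d s k (fst p) (snd p))"
  define A1 where "A1 = {p::'a \<times> 'a. p \<noteq> (0, 0) \<and> ?c p = card F ^ 1}"
  define A3 where "A3 = {p::'a \<times> 'a. p \<noteq> (0, 0) \<and> ?c p = card F ^ 3}"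
  have N_card: "N\<^sub>1 = card A1" "N\<^sub>3 = card A3"
    unfolding N1 N3 A1_def A3_def using rank_class_eq[OF assms(1,2)] by simp_all
  have "card F \<noteq> card F ^ 3"
    using card_F_ge_2 power_strict_increasing[of 1 3 "card F"] by simp
  have classes: "?c p = card F \<or> ?c p = card F ^ 3" if "p \<in> ?P" for p
    using that rank_radical_dimension[of "fst p" "snd p", OF _ assms(1)] by fastforce
  have partition: "?P = A1 \<union> A3" "A1 \<inter> A3 = {}"
    unfolding A1_def A3_def using classes \<open>card F \<noteq> card F ^ 3\<close> by fastforce+
  have "(\<Sum>p\<in>A1. ?c p) = card A1 * card F" "(\<Sum>p\<in>A3. ?c p) = card A3 * card F ^ 3"
    unfolding A1_def A3_def by simp_all
  hence weighted: "N\<^sub>1 * card F + N\<^sub>3 * card F ^ 3 = card ?P + (card F ^ s - 1) * (card F ^ (s + 1) - 1)"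
    using incidence_count N_card partition by (simp add: sum.union_disjoint)
  have N_sum: "N\<^sub>1 + N\<^sub>3 = card ?P" using N_card partition by (simp add: card_Un_disjoint)
  show "N\<^sub>1 + N\<^sub>3 + 1 = card F ^ (2 * s)" using N_sum card_nonzero_pairs by simp
  have "real (card ?P) = real (card F) ^ (2 * s) - 1"
    using arg_cong[OF card_nonzero_pairs, of real] by simp
  moreover have "1 \<le> card F ^ s" "1 \<le> card F ^ (s + 1)" using card_F_ge_2 by simp_all
  ultimately show "real N\<^sub>1 * card F + real N\<^sub>3 * card F ^ 3
      = real (card F) ^ (2 * s) - 1 + (real (card F) ^ s - 1) * (real (card F) ^ (s + 1) - 1)"
    using arg_cong[OF weighted, of real] by simp
qed

end

text \<open>Solving the two counting equations, with \<open>q = q\<^sub>0\<close> and \<open>q Y = q\<^sub>0^s\<close>.\<close>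
lemma two_weight_solution:
  fixes N1 N3 q Y :: real
  assumes q: "1 < q" and total: "N1 + N3 + 1 = (q*Y)^2"
    and weight: "N1 * q + N3 * q^3 = (q*Y)^2 - 1 + (q*Y - 1) * (q^2*Y - 1)"
  shows "N3 = (Y - 1) * (q*Y - 1) / (q^2 - 1)"
    and "N1 = (q*Y - 1) * (q^3*Y - q*Y - Y + q^2) / (q^2 - 1)"
proof -
  have "1 < q^2" using less_1_mult[OF q q] by (simp add: power2_eq_square)
  hence nonzero: "q^2 - 1 \<noteq> 0" by linarith
  have "q * (N3 * (q^2 - 1) - (Y - 1) * (q*Y - 1)) = 0" using total weight by algebra
  hence N3: "N3 * (q^2 - 1) = (Y - 1) * (q*Y - 1)" using q by simp
  thus "N3 = (Y - 1) * (q*Y - 1) / (q^2 - 1)" using nonzero by (simp add: eq_divide_eq)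
  have "N1 * (q^2 - 1) = (q*Y - 1) * (q^3*Y - q*Y - Y + q^2)" using total N3 by algebra
  thus "N1 = (q*Y - 1) * (q^3*Y - q*Y - Y + q^2) / (q^2 - 1)" using nonzero by (simp add: eq_divide_eq)
qed

theorem mainTheorem3:
  fixes n k d s :: nat
    and n\<^sub>1 n\<^sub>3 :: nat
  assumes "card (UNIV :: 'a set) = 2 ^ n"
    and "0 < n" and "1 \<le> k" and "k \<le> n - 1"
    and "3 * k \<noteq> n" and "3 * k \<noteq> 2 * n"
    and "d = gcd n k" and "s = n div d" and "odd s"
    and "n\<^sub>1 = card {(\<alpha>::'a::{finite,field}, \<beta>::'a). (\<alpha>, \<beta>) \<noteq> (0, 0) \<and> rank_ab d s k \<alpha> \<beta> = s - 1}"
    and "n\<^sub>3 = card {(\<alpha>::'a::{finite,field}, \<beta>::'a). (\<alpha>, \<beta>) \<noteq> (0, 0) \<and> rank_ab d s k \<alpha> \<beta> = s - 3}"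
  shows "n\<^sub>1 + n\<^sub>3 = 2 ^ (2 * n) - 1
    \<and> real n\<^sub>1 = (2 ^ n - 1) * (2 ^ (n + 2 * d) - 2 ^ n - 2 ^ (n - d) + 2 ^ (2 * d)) / (2 ^ (2 * d) - 1)
    \<and> real n\<^sub>3 = (2 ^ (n - d) - 1) * (2 ^ n - 1) / (2 ^ (2 * d) - 1)"
proof -
  interpret binary_field "TYPE('a)" n k d s
    using assms(1-4,7,8) by unfold_locales auto
  have "3 < s" using s_gt_3 assms(5,6,9) by blast
  note counts = rank_count_equations[OF assms(9) \<open>3 < s\<close> assms(10,11)]
  define q :: real where "q = 2 ^ d"
  define Y :: real where "Y = 2 ^ (n - d)"
  have powers: "q ^ s = q * Y" "q * Y = 2 ^ n" "q^2 = 2 ^ (2 * d)" "q^3 * Y = 2 ^ (n + 2 * d)"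
    using n_eq d_pos s_pos unfolding q_def Y_def
    by (simp_all add: power_mult[symmetric] power_add[symmetric] algebra_simps)
  have "card F ^ (2 * s) = 2 ^ (2 * n)" unfolding card_F n_eq by (simp add: power_mult ac_simps)
  hence sum: "n\<^sub>1 + n\<^sub>3 = 2 ^ (2 * n) - 1" using counts(1) by simp
  have "real (card F) = q" unfolding q_def card_F by simp
  moreover have "q ^ (2 * s) = (q*Y)^2" by (simp only: mult.commute[of 2] power_mult powers(1))
  moreover have "q ^ (s + 1) = q^2 * Y" using powers(1) by (simp add: power2_eq_square)
  ultimately have total: "real n\<^sub>1 + real n\<^sub>3 + 1 = (q*Y)^2"
    and weight: "real n\<^sub>1 * q + real n\<^sub>3 * q^3 = (q*Y)^2 - 1 + (q*Y - 1) * (q^2*Y - 1)"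
    using arg_cong[OF counts(1), of real] counts(2) powers(1) by simp_all
  have "1 < q" unfolding q_def using d_pos by simp
  note solution = two_weight_solution[OF this total weight]
  show ?thesis
    using sum solution[unfolded powers(2-4), unfolded Y_def] by simp
qed

end
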